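(* Let $a=a_1a_2\cdots a_n$ be a signed permutation on $[n]$, let $\tilde s=(0,a_1,a_2,\ldots,a_n,-a_n,-a_{n-1},\ldots,-a_1)$ and $p_r=(-1,-2,\ldots,-n+1,-n,n,n-1,\ldots,2,1,0)$, both $(2n+1)$-cycles on $\{-n,\ldots,-1,0,1,\ldots,n\}$. Then $$d_r(a)\ \ge\ \frac{2n+1-C(p_r\tilde s)}{2}.$$
   Context: Permutations are multiplied as composition of maps, $(\sigma\tau)(x)=\sigma(\tau(x))$; $C(\pi)$ is the number of cycles of $\pi$, fixed points included. A signed permutation on $[n]$ is a sequence $a_1\cdots a_n$ with $a_k\in\{\pm1,\ldots,\pm n\}$ such that $|a_1|,\ldots,|a_n|$ is a permutation of $[n]$. A reversal $\varrho_{i,j}$ ($1\le i\le j\le n$) changes $a$ into $a_1\cdots a_{i-1}(-a_j)(-a_{j-1})\cdots(-a_i)a_{j+1}\cdots a_n$. The reversal distance $d_r(a)$ is the minimum number of reversals needed to transform $a$ into $12\cdots n$. *)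

theory Defs
  imports Complex_Main "HOL-Combinatorics.Cycles"
begin

definition signed_perm :: "nat \<Rightarrow> int list \<Rightarrow> bool" where
  "signed_perm n a \<longleftrightarrow> length a = n \<and> distinct (map abs a) \<and> set (map abs a) = {1..int n}"

text \<open>The reversal rho_{i,j} (1-indexed, intended for 1 <= i <= j <= n).\<close>
definition reversal :: "nat \<Rightarrow> nat \<Rightarrow> int list \<Rightarrow> int list" where
  "reversal i j a = take (i - 1) a @ map uminus (rev (take (j - i + 1) (drop (i - 1) a))) @ drop j a"

definition identity_sp :: "nat \<Rightarrow> int list" where
  "identity_sp n = map int [1..<n+1]"

definition reversal_distance :: "int list \<Rightarrow> nat" where
  "reversal_distance a = (LEAST k. \<exists>rs :: (nat \<times> nat) list. length rs = k \<and>
      (\<forall>(i, j) \<in> set rs. 1 \<le> i \<and> i \<le> j \<and> j \<le> length a) \<and>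
      fold (\<lambda>(i, j) b. reversal i j b) rs a = identity_sp (length a))"

text \<open>Number of cycles (orbits, fixed points included) of a permutation pi of S.\<close>
definition num_cycles :: "('a \<Rightarrow> 'a) \<Rightarrow> 'a set \<Rightarrow> nat" where
  "num_cycles \<pi> S = card ((\<lambda>x. {(\<pi> ^^ k) x | k. True}) ` S)"

definition s_tilde :: "int list \<Rightarrow> int \<Rightarrow> int" where
  "s_tilde a = cycle_of_list (0 # a @ map uminus (rev a))"

definition p_r :: "nat \<Rightarrow> int \<Rightarrow> int" where
  "p_r n = cycle_of_list (map (\<lambda>k. - int k) [1..<n+1] @ map int (rev [0..<n+1]))"

end

theory Submission
  imports Defs "HOL-Combinatorics.Orbits"
begin

(*
  Write a = xs ys zs, where ys is the block reversed by rho_{i,j}.  The cycle s_tilde a is the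
  cyclic word 0 xs ys zs (-zs^r) (-ys^r) (-xs^r), and rho_{i,j} interchanges its blocks ys and
  -ys^r.  A block interchange in a cyclic word is the composite of two transpositions on the
  right (cut the cycle into two, then rejoin the pieces in the other order), and composing with
  a transposition adds at most one cycle.  So a reversal raises C(p_r s_tilde) by at most 2.
  For the identity, p_r is the cycle of the reversed word, i.e. the inverse of s_tilde, so
  C(p_r s_tilde) = 2n+1; along a sorting sequence of length d this gives
  2n+1 <= C(p_r s_tilde a) + 2d.
*)

section \<open>Cycle counts\<close>

lemma num_cycles_eq_card_orbits:
  assumes "permutation \<pi>"
  shows "num_cycles \<pi> S = card (orbit \<pi> ` S)"
  unfolding num_cycles_def orbit_altdef_permutation[OF assms] ..

lemma num_cycles_id:
  assumes "finite S"
  shows "num_cycles id S = card S"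
proof -
  have "(\<lambda>x. {(id ^^ k) x | k. True}) ` S = (\<lambda>x. {x}) ` S" by simp
  then show ?thesis
    unfolding num_cycles_def by (simp add: card_image inj_on_def)
qed

lemma orbit_eq_of_mem:
  assumes "permutation f" "x \<in> orbit f z"
  shows "orbit f x = orbit f z"
proof -
  have "z \<in> orbit f x"
    using orbit_swap[OF permutation_self_in_orbit[OF assms(1)] assms(2)] .
  then show ?thesis using assms(2) by (blast intro: orbit_trans)
qed

lemma num_cycles_comp_transpose_le:
  assumes "finite S" "g permutes S" "x \<in> S" "y \<in> S"
  shows "num_cycles (g \<circ> transpose x y) S \<le> num_cycles g S + 1"
proof -
  define h where "h = g \<circ> transpose x y"
  have "h permutes S"
    unfolding h_def using assms by (intro permutes_compose permutes_swap_id)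
  then have perm_h: "permutation h" and perm_g: "permutation g"
    using assms(1,2) permutation_permutes by blast+
  \<comment> \<open>orbits of h missing x and y are orbits of g, none of them the g-orbit of x\<close>
  define A where "A = {z \<in> S. x \<notin> orbit h z \<and> y \<notin> orbit h z}"
  have orbit_A: "orbit g z = orbit h z" if "z \<in> A" for z
  proof (rule orbit_cong)
    show "z \<in> orbit h z" using perm_h by (rule permutation_self_in_orbit)
    show "g s = h s" if "s \<in> orbit h z" for s
    proof -
      have "s \<noteq> x" "s \<noteq> y" using \<open>z \<in> A\<close> that unfolding A_def by auto
      then show ?thesis unfolding h_def by simp
    qed
  qed
  have "orbit h ` S \<subseteq> orbit g ` A \<union> {orbit h x, orbit h y}"
    using orbit_A orbit_eq_of_mem[OF perm_h] unfolding A_def by fastforce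
  then have "card (orbit h ` S) \<le> card (orbit g ` A \<union> {orbit h x, orbit h y})"
    using assms(1) unfolding A_def by (intro card_mono) auto
  also have "\<dots> \<le> card (orbit g ` A) + card {orbit h x, orbit h y}"
    by (rule card_Un_le)
  also have "\<dots> \<le> card (orbit g ` A) + 2"
    by (simp add: card_insert_if)
  finally have "card (orbit h ` S) \<le> card (orbit g ` A) + 2" .
  moreover have "card (orbit g ` A) + 1 \<le> card (orbit g ` S)"
  proof -
    have "orbit g x \<notin> orbit g ` A"
      using orbit_A permutation_self_in_orbit[OF perm_g, of x] unfolding A_def by force
    then have "card (orbit g ` A) + 1 = card (insert (orbit g x) (orbit g ` A))"
      using assms(1) unfolding A_def by simp
    also have "\<dots> \<le> card (orbit g ` S)"
      using assms(1,3) unfolding A_def by (intro card_mono) auto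
    finally show ?thesis .
  qed
  ultimately show ?thesis
    unfolding h_def num_cycles_eq_card_orbits[OF perm_h[unfolded h_def]]
      num_cycles_eq_card_orbits[OF perm_g] by simp
qed

section \<open>Cycles given by lists\<close>

text \<open>\<open>cycle_of_list\<close> is the product of the transpositions of consecutive entries, so
  the next two identities need no distinctness.\<close>

lemma cycle_of_list_append_Cons:
  "cycle_of_list (xs @ y # ys) = cycle_of_list (xs @ [y]) \<circ> cycle_of_list (y # ys)"
proof (induction xs rule: induct_list012)
  case (3 x z zs)
  then show ?case by (simp add: comp_assoc)
qed simp_all

lemma cycle_of_list_append_pair:
  "cycle_of_list (xs @ [y, z]) = cycle_of_list (xs @ [y]) \<circ> transpose y z"
  using cycle_of_list_append_Cons[of xs y "[z]"] by simp

lemma cycle_of_list_rev_comp: "cycle_of_list (rev xs) \<circ> cycle_of_list xs = id"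
proof (induction xs rule: induct_list012)
  case (3 x y zs)
  have "cycle_of_list (rev (x # y # zs)) = cycle_of_list (rev (y # zs)) \<circ> transpose x y"
    using cycle_of_list_append_pair[of "rev zs" y x] by (simp add: transpose_commute)
  then show ?case using "3.IH"(2) by (simp add: comp_assoc)
qed simp_all

lemma cycle_of_list_append_commute:
  assumes "distinct (xs @ ys)"
  shows "cycle_of_list (xs @ ys) = cycle_of_list (ys @ xs)"
  using cycle_of_list_rotate_independent[of "xs @ ys" "length xs"] assms
  by (simp add: rotate_append)

lemma cycle_of_list_split:
  assumes "distinct (xs @ u # ys @ [v])"
  shows "cycle_of_list (xs @ u # ys @ [v]) \<circ> transpose u v
       = cycle_of_list (xs @ [u]) \<circ> cycle_of_list (ys @ [v])"
proof -
  have "cycle_of_list (u # ys @ [v]) = cycle_of_list (ys @ [v, u])"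
    using cycle_of_list_append_commute[of "[u]" "ys @ [v]"] assms by simp
  also have "\<dots> = cycle_of_list (ys @ [v]) \<circ> transpose u v"
    by (simp only: cycle_of_list_append_pair transpose_commute)
  finally have "cycle_of_list (u # ys @ [v]) \<circ> transpose u v = cycle_of_list (ys @ [v])"
    by (simp only: comp_assoc transpose_comp_involutory comp_id)
  then show ?thesis
    by (simp only: cycle_of_list_append_Cons[of xs u "ys @ [v]"] comp_assoc)
qed

lemma cycle_of_list_block_swap:
  assumes "distinct (xs @ bs @ ys @ cs @ zs)" "xs \<noteq> []" "bs \<noteq> []" "cs \<noteq> []"
  shows "cycle_of_list (xs @ cs @ ys @ bs @ zs)
       = cycle_of_list (xs @ bs @ ys @ cs @ zs)
         \<circ> transpose (last xs) (last (bs @ ys)) \<circ> transpose (last cs) (last bs)"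
proof -
  obtain xs' x where xs: "xs = xs' @ [x]" using assms(2) by (metis rev_exhaust)
  obtain bys' w where bys: "bs @ ys = bys' @ [w]"
    using assms(3) by (metis Nil_is_append_conv rev_exhaust)
  obtain bs' b where bs: "bs = bs' @ [b]" using assms(3) by (metis rev_exhaust)
  obtain cs' c where cs: "cs = cs' @ [c]" using assms(4) by (metis rev_exhaust)
  have rot: "cycle_of_list (cs @ zs @ xs) = cycle_of_list (zs @ xs @ cs)"
    "cycle_of_list (bs @ ys) = cycle_of_list (ys @ bs)"
    using assms(1) cycle_of_list_append_commute[of cs "zs @ xs"]
      cycle_of_list_append_commute[of bs ys] by auto
  have "cycle_of_list (xs @ bs @ ys @ cs @ zs) = cycle_of_list ((cs @ zs) @ (xs @ bs @ ys))"
    using assms(1) cycle_of_list_append_commute[of "xs @ bs @ ys" "cs @ zs"] by auto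
  also have "(cs @ zs) @ (xs @ bs @ ys) = (cs @ zs @ xs') @ x # bys' @ [w]"
    using xs bys by simp
  finally have old: "cycle_of_list (xs @ bs @ ys @ cs @ zs) \<circ> transpose x w
      = cycle_of_list (zs @ xs @ cs) \<circ> cycle_of_list (ys @ bs)"
    using assms(1) xs bys cycle_of_list_split[of "cs @ zs @ xs'" x bys' w] rot
    by (auto simp flip: append_assoc simp del: append_assoc)
  have "cycle_of_list (xs @ cs @ ys @ bs @ zs) = cycle_of_list (zs @ (xs @ cs @ ys @ bs))"
    using assms(1) cycle_of_list_append_commute[of "xs @ cs @ ys @ bs" zs] by auto
  also have "zs @ (xs @ cs @ ys @ bs) = (zs @ xs @ cs') @ c # (ys @ bs') @ [b]"
    using bs cs by simp
  finally have new: "cycle_of_list (xs @ cs @ ys @ bs @ zs) \<circ> transpose c b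
      = cycle_of_list (zs @ xs @ cs) \<circ> cycle_of_list (ys @ bs)"
    using assms(1) bs cs cycle_of_list_split[of "zs @ xs @ cs'" c "ys @ bs'" b] by auto
  have "cycle_of_list (xs @ cs @ ys @ bs @ zs)
      = cycle_of_list (xs @ cs @ ys @ bs @ zs) \<circ> transpose c b \<circ> transpose c b"
    by (simp only: comp_assoc transpose_comp_involutory comp_id)
  also have "\<dots> = cycle_of_list (xs @ bs @ ys @ cs @ zs) \<circ> transpose x w \<circ> transpose c b"
    by (simp only: old new)
  finally have "cycle_of_list (xs @ cs @ ys @ bs @ zs)
      = cycle_of_list (xs @ bs @ ys @ cs @ zs) \<circ> transpose x w \<circ> transpose c b" .
  moreover have "x = last xs" "w = last (bs @ ys)" "c = last cs" "b = last bs"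
    using xs bys cs bs by simp_all
  ultimately show ?thesis by (simp only:)
qed

section \<open>Signed permutations and reversals\<close>

lemma identity_sp_Suc: "identity_sp (Suc n) = identity_sp n @ [int (Suc n)]"
  unfolding identity_sp_def by simp

lemma reversal_block:
  assumes "ys \<noteq> []"
  shows "reversal (Suc (length xs)) (length xs + length ys) (xs @ ys @ zs)
       = xs @ map uminus (rev ys) @ zs"
  using assms unfolding reversal_def by (simp add: Suc_diff_le)

lemma reversal_blockE:
  assumes "1 \<le> i" "i \<le> j" "j \<le> length a"
  obtains xs ys zs where "a = xs @ ys @ zs" "ys \<noteq> []"
    "reversal i j a = xs @ map uminus (rev ys) @ zs"
proof
  let ?xs = "take (i - 1) a" and ?ys = "take (j - i + 1) (drop (i - 1) a)" and ?zs = "drop j a"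
  have "drop j a = drop (j - i + 1) (drop (i - 1) a)" using assms by simp
  then show "a = ?xs @ ?ys @ ?zs" by (metis append_take_drop_id)
  show "?ys \<noteq> []" using assms by simp
  show "reversal i j a = ?xs @ map uminus (rev ?ys) @ ?zs" unfolding reversal_def ..
qed

lemma length_reversal:
  assumes "1 \<le> i" "i \<le> j" "j \<le> length a"
  shows "length (reversal i j a) = length a"
proof -
  obtain xs ys zs where "a = xs @ ys @ zs" "reversal i j a = xs @ map uminus (rev ys) @ zs"
    using reversal_blockE[OF assms] by blast
  then show ?thesis by simp
qed

lemma reversal_append:
  assumes "1 \<le> i" "i \<le> j" "j \<le> length c"
  shows "reversal i j (c @ d) = reversal i j c @ d"
  using assms unfolding reversal_def by simp

lemma signed_perm_iff_mset: "signed_perm n a \<longleftrightarrow> mset (map abs a) = mset (identity_sp n)"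
proof -
  have "set (identity_sp n) = {1..<int (n + 1)}"
    unfolding identity_sp_def by (simp only: set_map set_upt image_int_atLeastLessThan of_nat_1)
  then have idsp: "distinct (identity_sp n)" "set (identity_sp n) = {1..int n}" "length (identity_sp n) = n"
    unfolding identity_sp_def by (auto simp: distinct_map)
  show ?thesis
  proof
    assume "signed_perm n a"
    then show "mset (map abs a) = mset (identity_sp n)"
      using idsp set_eq_iff_mset_eq_distinct[of "map abs a" "identity_sp n"]
      unfolding signed_perm_def by simp
  next
    assume eq: "mset (map abs a) = mset (identity_sp n)"
    then have "length a = n" using idsp(3) by (metis length_map mset_eq_length)
    then show "signed_perm n a"
      unfolding signed_perm_def using idsp eq mset_eq_imp_distinct_iff mset_eq_setD by metis
  qed
qed

lemma signed_perm_length: "signed_perm n a \<Longrightarrow> length a = n"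
  unfolding signed_perm_def by simp

lemma signed_perm_identity: "signed_perm n (identity_sp n)"
proof -
  have "map abs (identity_sp n) = identity_sp n"
    unfolding identity_sp_def by (induction n) auto
  then show ?thesis unfolding signed_perm_iff_mset by simp
qed

lemma signed_perm_reversal:
  assumes "signed_perm n a" "1 \<le> i" "i \<le> j" "j \<le> length a"
  shows "signed_perm n (reversal i j a)"
proof -
  obtain xs ys zs where "a = xs @ ys @ zs" "reversal i j a = xs @ map uminus (rev ys) @ zs"
    using reversal_blockE[OF assms(2-)] by blast
  then show ?thesis using assms(1) by (simp add: signed_perm_iff_mset rev_map o_def)
qed

lemma signed_perm_snocD:
  assumes "signed_perm (Suc t) (c @ [int (Suc t)])"
  shows "signed_perm t c"
  using assms unfolding signed_perm_iff_mset identity_sp_def by simp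

section \<open>The cycles \<open>s_tilde\<close> and \<open>p_r\<close>\<close>

definition mirror_list :: "int list \<Rightarrow> int list" where
  "mirror_list a = 0 # a @ map uminus (rev a)"

lemma s_tilde_conv_mirror_list: "s_tilde a = cycle_of_list (mirror_list a)"
  unfolding s_tilde_def mirror_list_def ..

lemma mirror_list_blocks:
  "mirror_list (xs @ ys @ zs)
     = (0 # xs) @ ys @ (zs @ map uminus (rev zs)) @ map uminus (rev ys) @ map uminus (rev xs)"
  "mirror_list (xs @ map uminus (rev ys) @ zs)
     = (0 # xs) @ map uminus (rev ys) @ (zs @ map uminus (rev zs)) @ ys @ map uminus (rev xs)"
  unfolding mirror_list_def by (simp_all add: rev_map o_def)

lemma distinct_mirror_list:
  assumes "signed_perm n a"
  shows "distinct (mirror_list a)"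
proof -
  have inj: "inj_on abs (set a)" and "distinct a"
    using assms unfolding signed_perm_def by (auto simp: distinct_map)
  moreover have "0 \<notin> set a"
    using assms unfolding signed_perm_def by force
  moreover have "- x \<notin> set a" if "x \<in> set a" for x
    using inj_onD[OF inj, of x "- x"] that \<open>0 \<notin> set a\<close> by force
  ultimately show ?thesis
    unfolding mirror_list_def by (auto simp: distinct_map inj_on_def)
qed

lemma set_mirror_list:
  assumes "signed_perm n a"
  shows "set (mirror_list a) = {- int n..int n}"
proof (intro set_eqI iffI)
  have abs_set: "abs ` set a = {1..int n}"
    using assms unfolding signed_perm_def by simp
  show "z \<in> {- int n..int n}" if "z \<in> set (mirror_list a)" for z
  proof -
    have "w \<in> {- int n..int n} \<and> - w \<in> {- int n..int n}" if "w \<in> set a" for w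
      using that abs_set by (force simp: abs_le_iff)
    then show ?thesis using that unfolding mirror_list_def by auto
  qed
  show "z \<in> set (mirror_list a)" if "z \<in> {- int n..int n}" for z
  proof (cases "z = 0")
    case False
    then have "abs z \<in> abs ` set a" using that abs_set by auto
    then obtain w where "w \<in> set a" "abs z = abs w" by auto
    then show ?thesis unfolding mirror_list_def by (auto simp: abs_eq_iff)
  qed (simp add: mirror_list_def)
qed

lemma s_tilde_reversal:
  assumes "distinct (mirror_list a)" "1 \<le> i" "i \<le> j" "j \<le> length a"
  obtains u v u' v' where "{u, v, u', v'} \<subseteq> set (mirror_list a)"
    "s_tilde (reversal i j a) = s_tilde a \<circ> transpose u v \<circ> transpose u' v'"
proof -
  obtain xs ys zs where a: "a = xs @ ys @ zs" "ys \<noteq> []"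
    and rev_a: "reversal i j a = xs @ map uminus (rev ys) @ zs"
    using reversal_blockE[OF assms(2-)] .
  let ?X = "0 # xs" and ?Y = "zs @ map uminus (rev zs)"
    and ?C = "map uminus (rev ys)" and ?Z = "map uminus (rev xs)"
  have ne: "?X \<noteq> []" "ys @ ?Y \<noteq> []" "?C \<noteq> []"
    using a(2) by simp_all
  have ml: "mirror_list a = ?X @ ys @ ?Y @ ?C @ ?Z"
    unfolding a by (rule mirror_list_blocks(1))
  have "s_tilde (reversal i j a) = cycle_of_list (?X @ ?C @ ?Y @ ys @ ?Z)"
    unfolding s_tilde_conv_mirror_list rev_a mirror_list_blocks(2) ..
  also have "\<dots> = cycle_of_list (?X @ ys @ ?Y @ ?C @ ?Z)
      \<circ> transpose (last ?X) (last (ys @ ?Y)) \<circ> transpose (last ?C) (last ys)"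
  proof (rule cycle_of_list_block_swap)
    show "distinct (?X @ ys @ ?Y @ ?C @ ?Z)"
      using assms(1) unfolding ml .
  qed (use ne a(2) in simp_all)
  also have "cycle_of_list (?X @ ys @ ?Y @ ?C @ ?Z) = s_tilde a"
    unfolding s_tilde_conv_mirror_list ml ..
  finally show ?thesis
  proof (rule that[rotated])
    have "set ?X \<union> set (ys @ ?Y) \<union> set ?C \<union> set ys \<subseteq> set (mirror_list a)"
      unfolding ml set_append by blast
    moreover note last_in_set[OF ne(1)] last_in_set[OF ne(2)] last_in_set[OF ne(3)]
      last_in_set[OF a(2)]
    ultimately show "{last ?X, last (ys @ ?Y), last ?C, last ys} \<subseteq> set (mirror_list a)"
      by blast
  qed
qed

lemma s_tilde_permutes:
  assumes "signed_perm n a"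
  shows "s_tilde a permutes {- int n..int n}"
  using cycle_permutes[of "mirror_list a"] set_mirror_list[OF assms]
  unfolding s_tilde_conv_mirror_list by simp

lemma p_r_conv_mirror_list: "p_r n = cycle_of_list (rev (mirror_list (identity_sp n)))"
proof -
  have "[0..<n + 1] = 0 # [1..<n + 1]" by (simp add: upt_rec)
  then show ?thesis
    unfolding p_r_def mirror_list_def identity_sp_def by (simp add: rev_map o_def)
qed

lemma p_r_permutes: "p_r n permutes {- int n..int n}"
  using cycle_permutes[of "rev (mirror_list (identity_sp n))"]
    set_mirror_list[OF signed_perm_identity]
  unfolding p_r_conv_mirror_list by simp

lemma p_r_comp_s_tilde_identity: "p_r n \<circ> s_tilde (identity_sp n) = id"
  unfolding p_r_conv_mirror_list s_tilde_conv_mirror_list by (rule cycle_of_list_rev_comp)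

lemma num_cycles_reversal_le:
  assumes "signed_perm n a" "1 \<le> i" "i \<le> j" "j \<le> length a"
  shows "num_cycles (p_r n \<circ> s_tilde (reversal i j a)) {- int n..int n}
       \<le> num_cycles (p_r n \<circ> s_tilde a) {- int n..int n} + 2"
proof -
  let ?S = "{- int n..int n}" and ?g = "p_r n \<circ> s_tilde a"
  obtain u v u' v' where uv: "{u, v, u', v'} \<subseteq> ?S"
    and eq: "s_tilde (reversal i j a) = s_tilde a \<circ> transpose u v \<circ> transpose u' v'"
    using s_tilde_reversal[OF distinct_mirror_list[OF assms(1)] assms(2-)]
    unfolding set_mirror_list[OF assms(1)] .
  have g: "?g permutes ?S"
    using permutes_compose[OF s_tilde_permutes[OF assms(1)] p_r_permutes] .
  have "?g \<circ> transpose u v permutes ?S"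
    using uv by (intro permutes_compose[OF _ g] permutes_swap_id) auto
  then have "num_cycles (?g \<circ> transpose u v \<circ> transpose u' v') ?S
      \<le> num_cycles (?g \<circ> transpose u v) ?S + 1"
    using uv by (intro num_cycles_comp_transpose_le) auto
  also have "\<dots> \<le> num_cycles ?g ?S + 2"
    using uv g num_cycles_comp_transpose_le[of ?S ?g u v] by simp
  finally show ?thesis unfolding eq by (simp add: comp_assoc)
qed

section \<open>Sorting sequences\<close>

definition sorting_sequence :: "(nat \<times> nat) list \<Rightarrow> int list \<Rightarrow> bool" where
  "sorting_sequence rs a \<longleftrightarrow> (\<forall>(i, j) \<in> set rs. 1 \<le> i \<and> i \<le> j \<and> j \<le> length a) \<and>
     fold (\<lambda>(i, j) b. reversal i j b) rs a = identity_sp (length a)"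

lemma sorting_sequence_Nil: "sorting_sequence [] a \<longleftrightarrow> a = identity_sp (length a)"
  unfolding sorting_sequence_def by simp

lemma sorting_sequence_Cons:
  "sorting_sequence ((i, j) # rs) a \<longleftrightarrow>
     1 \<le> i \<and> i \<le> j \<and> j \<le> length a \<and> sorting_sequence rs (reversal i j a)"
  unfolding sorting_sequence_def by (auto simp: length_reversal)

lemma sorting_sequence_snoc:
  assumes "sorting_sequence rs c"
  shows "sorting_sequence rs (c @ [int (Suc (length c))])"
  using assms
proof (induction rs arbitrary: c)
  case Nil
  then show ?case by (simp add: sorting_sequence_Nil identity_sp_Suc)
next
  case (Cons r rs)
  obtain i j where r: "r = (i, j)" by fastforce
  then have ij: "1 \<le> i" "i \<le> j" "j \<le> length c" and "sorting_sequence rs (reversal i j c)"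
    using Cons.prems by (simp_all add: sorting_sequence_Cons)
  then have "sorting_sequence rs (reversal i j c @ [int (Suc (length c))])"
    using Cons.IH length_reversal[OF ij] by metis
  then show ?case
    unfolding r sorting_sequence_Cons using ij by (simp add: reversal_append)
qed

lemma sorting_sequence_flip_last:
  assumes "sorting_sequence rs (c @ [x])"
  shows "sorting_sequence ((Suc (length c), Suc (length c)) # rs) (c @ [- x])"
proof -
  have "reversal (Suc (length c)) (Suc (length c)) (c @ [- x]) = c @ [x]"
    using reversal_block[of "[- x]" c "[]"] by simp
  then show ?thesis using assms by (simp add: sorting_sequence_Cons)
qed

lemma sorting_sequence_exists:
  assumes "signed_perm n a"
  shows "\<exists>rs. sorting_sequence rs a"
  using assms
proof (induction n arbitrary: a)
  case 0
  then have "sorting_sequence [] a"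
    using signed_perm_length[OF "0.prems"] by (simp add: sorting_sequence_Nil identity_sp_def)
  then show ?case ..
next
  case (Suc t)
  have sorted_last: "\<exists>rs. sorting_sequence rs (c @ [int (Suc t)])"
    if sp: "signed_perm (Suc t) (c @ [int (Suc t)])" for c
  proof -
    have "length c = t" using signed_perm_length[OF sp] by simp
    moreover obtain rs where "sorting_sequence rs c"
      using Suc.IH[OF signed_perm_snocD[OF sp]] by blast
    ultimately show ?thesis using sorting_sequence_snoc by metis
  qed
  have len: "length a = Suc t" using signed_perm_length[OF Suc.prems] .
  have "int (Suc t) \<in> abs ` set a"
    using Suc.prems unfolding signed_perm_def by simp
  then obtain x where "x \<in> set a" and x: "abs x = int (Suc t)" by auto
  then obtain xs zs where a: "a = xs @ x # zs" by (meson split_list)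
  define c where "c = xs @ map uminus (rev zs)"
  have c: "length c = t" using len unfolding a c_def by simp
  have rev_a: "reversal (Suc (length xs)) (Suc t) a = c @ [- x]"
    using reversal_block[of "x # zs" xs "[]"] len unfolding a c_def by simp
  have ij: "1 \<le> Suc (length xs)" "Suc (length xs) \<le> Suc t" "Suc t \<le> length a"
    using len unfolding a by simp_all
  have sp: "signed_perm (Suc t) (c @ [- x])"
    using signed_perm_reversal[OF Suc.prems ij] rev_a by simp
  have "\<exists>rs. sorting_sequence rs (c @ [- x])"
  proof (cases "x < 0")
    case True
    then show ?thesis using sorted_last sp x by simp
  next
    case False
    then have "signed_perm (Suc t) (c @ [int (Suc t)])"
      using sp x by (simp add: signed_perm_iff_mset)
    then obtain rs where "sorting_sequence rs (c @ [x])"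
      using sorted_last x False by auto
    then show ?thesis using sorting_sequence_flip_last by blast
  qed
  then show ?case using rev_a ij sorting_sequence_Cons by metis
qed

lemma num_cycles_lower_bound:
  assumes "signed_perm n a" "sorting_sequence rs a"
  shows "2 * n + 1 \<le> num_cycles (p_r n \<circ> s_tilde a) {- int n..int n} + 2 * length rs"
  using assms
proof (induction rs arbitrary: a)
  case Nil
  then have a: "a = identity_sp n"
    using signed_perm_length sorting_sequence_Nil by metis
  have "num_cycles (p_r n \<circ> s_tilde a) {- int n..int n} = card {- int n..int n}"
    unfolding a p_r_comp_s_tilde_identity by (intro num_cycles_id) simp
  moreover have "card {- int n..int n} = 2 * n + 1" by simp
  ultimately show ?case by (simp only: list.size(3) mult_0_right add_0_right le_refl)
next
  case (Cons r rs)
  obtain i j where r: "r = (i, j)" by fastforce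
  then have ij: "1 \<le> i" "i \<le> j" "j \<le> length a" and "sorting_sequence rs (reversal i j a)"
    using Cons.prems(2) by (simp_all add: sorting_sequence_Cons)
  then have "2 * n + 1 \<le> num_cycles (p_r n \<circ> s_tilde (reversal i j a)) {- int n..int n}
      + 2 * length rs"
    using Cons.IH signed_perm_reversal[OF Cons.prems(1) ij] by blast
  moreover note num_cycles_reversal_le[OF Cons.prems(1) ij]
  moreover have "length (r # rs) = Suc (length rs)" by simp
  ultimately show ?case by linarith
qed

lemma reversal_distance_attained:
  assumes "sorting_sequence rs a"
  obtains rs' where "sorting_sequence rs' a" "length rs' = reversal_distance a"
proof -
  let ?P = "\<lambda>k. \<exists>rs. length rs = k \<and> sorting_sequence rs a"
  have "reversal_distance a = Least ?P"
    unfolding reversal_distance_def sorting_sequence_def ..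
  moreover have "?P (Least ?P)"
    using assms by (intro LeastI_ex[of ?P]) blast
  ultimately show ?thesis using that by auto
qed

theorem theorem4:
  fixes n :: nat and a :: "int list"
  assumes "signed_perm n a"
  shows "real (reversal_distance a) \<ge>
    (real (2 * n + 1) - real (num_cycles (p_r n \<circ> s_tilde a) {-int n..int n})) / 2"
proof -
  obtain rs where "sorting_sequence rs a"
    using sorting_sequence_exists[OF assms] by blast
  then obtain rs' where "sorting_sequence rs' a" "length rs' = reversal_distance a"
    by (rule reversal_distance_attained)
  then have "2 * n + 1 \<le> num_cycles (p_r n \<circ> s_tilde a) {- int n..int n} + 2 * reversal_distance a"
    using num_cycles_lower_bound[OF assms] by metis
  then have "real (2 * n + 1)
      \<le> real (num_cycles (p_r n \<circ> s_tilde a) {- int n..int n} + 2 * reversal_distance a)"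
    by (simp only: of_nat_le_iff)
  then show ?thesis by simp
qed

end
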